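(* Let $R$ be a commutative ring with identity, $I,J$ ideals of $R$, and $N$ an injective cogenerator of the category of $R$-modules. If $N$ is $I$-reduced, then $N$ is $I$-coreduced. If $N$ is $(I,J)$-prime, then $N$ is $(I,J)$-coprime.
   Context: All rings are commutative with identity and modules are unital. An $R$-module $M$ is $I$-reduced if for all $m\in M$, $I^2m=0$ implies $Im=0$; $I$-coreduced if $IM=I^2M$; $(I,J)$-prime if for all $m\in M$, $IJm=0$ implies $Im=0$ or $Jm=0$; $(I,J)$-coprime if $IJM=IM$ or $IJM=JM$. *)

theory Defs
  imports "HOL-Algebra.Module" "HOL-Algebra.Ideal_Product"
begin

definition mod_hom :: "('a, 'c) ring_scheme \<Rightarrow> ('a, 'b) module \<Rightarrow> ('a, 'd) module \<Rightarrow> ('b \<Rightarrow> 'd) \<Rightarrow> bool" where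
  "mod_hom R M M' f \<longleftrightarrow>
     f \<in> carrier M \<rightarrow> carrier M' \<and>
     (\<forall>x\<in>carrier M. \<forall>y\<in>carrier M. f (x \<oplus>\<^bsub>M\<^esub> y) = f x \<oplus>\<^bsub>M'\<^esub> f y) \<and>
     (\<forall>a\<in>carrier R. \<forall>x\<in>carrier M. f (a \<odot>\<^bsub>M\<^esub> x) = a \<odot>\<^bsub>M'\<^esub> f x)"

text \<open>Injective module, tested against all R-modules whose carrier lives in the type 'm.\<close>
definition injective_module :: "'m itself \<Rightarrow> ('a, 'c) ring_scheme \<Rightarrow> ('a, 'b) module \<Rightarrow> bool" where
  "injective_module (_::'m itself) R N \<longleftrightarrow> module R N \<and>
     (\<forall>(A::('a,'m) module) (B::('a,'m) module) f g.
        module R A \<longrightarrow> module R B \<longrightarrow> mod_hom R A B f \<longrightarrow> inj_on f (carrier A) \<longrightarrow>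
        mod_hom R A N g \<longrightarrow>
        (\<exists>h. mod_hom R B N h \<and> (\<forall>x\<in>carrier A. h (f x) = g x)))"

definition cogenerator_module :: "'m itself \<Rightarrow> ('a, 'c) ring_scheme \<Rightarrow> ('a, 'b) module \<Rightarrow> bool" where
  "cogenerator_module (_::'m itself) R N \<longleftrightarrow> module R N \<and>
     (\<forall>(M::('a,'m) module). module R M \<longrightarrow>
        (\<forall>m\<in>carrier M. m \<noteq> \<zero>\<^bsub>M\<^esub> \<longrightarrow> (\<exists>f. mod_hom R M N f \<and> f m \<noteq> \<zero>\<^bsub>N\<^esub>)))"

definition ideal_kills :: "('a, 'b) module \<Rightarrow> 'a set \<Rightarrow> 'b \<Rightarrow> bool" where
  "ideal_kills M I m \<longleftrightarrow> (\<forall>a\<in>I. a \<odot>\<^bsub>M\<^esub> m = \<zero>\<^bsub>M\<^esub>)"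

text \<open>The submodule IM: the smallest submodule containing all a m with a in I, m in M
  (i.e. the set of finite sums of such products).\<close>
definition ideal_module :: "('a, 'c) ring_scheme \<Rightarrow> ('a, 'b) module \<Rightarrow> 'a set \<Rightarrow> 'b set" where
  "ideal_module R M I = \<Inter>{H. submodule H R M \<and> {a \<odot>\<^bsub>M\<^esub> m | a m. a \<in> I \<and> m \<in> carrier M} \<subseteq> H}"

definition I_reduced :: "('a, 'c) ring_scheme \<Rightarrow> ('a, 'b) module \<Rightarrow> 'a set \<Rightarrow> bool" where
  "I_reduced R M I \<longleftrightarrow> (\<forall>m\<in>carrier M. ideal_kills M (I \<cdot>\<^bsub>R\<^esub> I) m \<longrightarrow> ideal_kills M I m)"

definition I_coreduced :: "('a, 'c) ring_scheme \<Rightarrow> ('a, 'b) module \<Rightarrow> 'a set \<Rightarrow> bool" where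
  "I_coreduced R M I \<longleftrightarrow> ideal_module R M I = ideal_module R M (I \<cdot>\<^bsub>R\<^esub> I)"

definition IJ_prime :: "('a, 'c) ring_scheme \<Rightarrow> ('a, 'b) module \<Rightarrow> 'a set \<Rightarrow> 'a set \<Rightarrow> bool" where
  "IJ_prime R M I J \<longleftrightarrow> (\<forall>m\<in>carrier M. ideal_kills M (I \<cdot>\<^bsub>R\<^esub> J) m \<longrightarrow>
      ideal_kills M I m \<or> ideal_kills M J m)"

definition IJ_coprime :: "('a, 'c) ring_scheme \<Rightarrow> ('a, 'b) module \<Rightarrow> 'a set \<Rightarrow> 'a set \<Rightarrow> bool" where
  "IJ_coprime R M I J \<longleftrightarrow> ideal_module R M (I \<cdot>\<^bsub>R\<^esub> J) = ideal_module R M I \<or>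
      ideal_module R M (I \<cdot>\<^bsub>R\<^esub> J) = ideal_module R M J"

end

theory Submission
  imports Defs
begin

(* If every element of N killed by an ideal K is killed by an ideal L \<supseteq> K, then KN = LN.
   Otherwise some x \<in> LN lies outside KN; as N cogenerates N/KN, some endomorphism h of N
   vanishes on KN but not at x. Then k (h m) = h (k m) = 0 for k \<in> K, so every h m is killed
   by K, hence by L, and h vanishes on LN, contradicting h x \<noteq> 0.
   For I-reduced N take K = I^2 and L = I. For (I,J)-prime N, if u is killed by IJ but not by I
   and v by IJ but not by J, then u + v is killed by IJ but by neither I nor J; so either all
   IJ-torsion is I-torsion or all of it is J-torsion, and the same argument applies. *)

definition quot_class :: "('a, 'n, 'e) module_scheme \<Rightarrow> 'n set \<Rightarrow> 'n \<Rightarrow> ('a + 'n) set" where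
  "quot_class M S x = Inr ` {y \<in> carrier M. y \<ominus>\<^bsub>M\<^esub> x \<in> S}"

definition quot_rep :: "('a, 'n, 'e) module_scheme \<Rightarrow> 'n set \<Rightarrow> ('a + 'n) set \<Rightarrow> 'n" where
  "quot_rep M S X = (SOME x. x \<in> carrier M \<and> X = quot_class M S x)"

(* Classes are tagged with Inr so that M/S lives in the type quantified over by
   cogenerator_module; mult and one are dummies. *)
definition quotient_module :: "('a, 'n, 'e) module_scheme \<Rightarrow> 'n set \<Rightarrow> ('a, ('a + 'n) set) module" where
  "quotient_module M S = \<lparr>carrier = quot_class M S ` carrier M, mult = (\<lambda>X Y. X), one = {},
     zero = quot_class M S \<zero>\<^bsub>M\<^esub>,
     add = (\<lambda>X Y. quot_class M S (quot_rep M S X \<oplus>\<^bsub>M\<^esub> quot_rep M S Y)),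
     smult = (\<lambda>r X. quot_class M S (r \<odot>\<^bsub>M\<^esub> quot_rep M S X))\<rparr>"

context module
begin

lemma quot_class_eq_iff:
  assumes S: "submodule S R M" and x: "x \<in> carrier M" and y: "y \<in> carrier M"
  shows "quot_class M S x = quot_class M S y \<longleftrightarrow> x \<ominus>\<^bsub>M\<^esub> y \<in> S"
proof
  assume "quot_class M S x = quot_class M S y"
  moreover have "Inr x \<in> quot_class M S x"
    using x subgroup.one_closed[OF submodule.axioms(1)[OF S]]
    unfolding quot_class_def by (auto simp: M.minus_eq M.r_neg)
  ultimately show "x \<ominus>\<^bsub>M\<^esub> y \<in> S" unfolding quot_class_def by auto
next
  assume xy: "x \<ominus>\<^bsub>M\<^esub> y \<in> S"
  have yx: "y \<ominus>\<^bsub>M\<^esub> x \<in> S"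
    using submoduleE(3)[OF S xy] x y by (simp add: M.minus_eq M.minus_add M.a_ac)
  have "z \<ominus>\<^bsub>M\<^esub> x \<in> S \<longleftrightarrow> z \<ominus>\<^bsub>M\<^esub> y \<in> S" if z: "z \<in> carrier M" for z
  proof -
    have "z \<ominus>\<^bsub>M\<^esub> y = (z \<ominus>\<^bsub>M\<^esub> x) \<oplus>\<^bsub>M\<^esub> (x \<ominus>\<^bsub>M\<^esub> y)" "z \<ominus>\<^bsub>M\<^esub> x = (z \<ominus>\<^bsub>M\<^esub> y) \<oplus>\<^bsub>M\<^esub> (y \<ominus>\<^bsub>M\<^esub> x)"
      using x y z by (simp_all add: M.minus_eq M.a_assoc M.r_neg1)
    then show ?thesis using xy yx submoduleE(5)[OF S] by metis
  qed
  then show "quot_class M S x = quot_class M S y" unfolding quot_class_def by auto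
qed

lemma quot_rep_class:
  assumes S: "submodule S R M" and x: "x \<in> carrier M"
  shows "quot_rep M S (quot_class M S x) \<in> carrier M"
    and "quot_rep M S (quot_class M S x) \<ominus>\<^bsub>M\<^esub> x \<in> S"
proof -
  have "\<exists>z. z \<in> carrier M \<and> quot_class M S x = quot_class M S z" using x by blast
  then have "quot_rep M S (quot_class M S x) \<in> carrier M \<and>
      quot_class M S x = quot_class M S (quot_rep M S (quot_class M S x))"
    unfolding quot_rep_def by (rule someI_ex)
  then show "quot_rep M S (quot_class M S x) \<in> carrier M"
    and "quot_rep M S (quot_class M S x) \<ominus>\<^bsub>M\<^esub> x \<in> S"
    using quot_class_eq_iff[OF S] x by metis+
qed

lemma quotient_module_add:
  assumes S: "submodule S R M" and x: "x \<in> carrier M" and y: "y \<in> carrier M"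
  shows "quot_class M S x \<oplus>\<^bsub>quotient_module M S\<^esub> quot_class M S y = quot_class M S (x \<oplus>\<^bsub>M\<^esub> y)"
proof -
  let ?u = "quot_rep M S (quot_class M S x)" and ?v = "quot_rep M S (quot_class M S y)"
  note u = quot_rep_class[OF S x] and v = quot_rep_class[OF S y]
  have "(?u \<oplus>\<^bsub>M\<^esub> ?v) \<ominus>\<^bsub>M\<^esub> (x \<oplus>\<^bsub>M\<^esub> y) = (?u \<ominus>\<^bsub>M\<^esub> x) \<oplus>\<^bsub>M\<^esub> (?v \<ominus>\<^bsub>M\<^esub> y)"
    using u(1) v(1) x y by (simp add: M.minus_eq M.minus_add M.a_ac)
  then have "(?u \<oplus>\<^bsub>M\<^esub> ?v) \<ominus>\<^bsub>M\<^esub> (x \<oplus>\<^bsub>M\<^esub> y) \<in> S"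
    using u(2) v(2) submoduleE(5)[OF S] by simp
  then show ?thesis unfolding quotient_module_def using quot_class_eq_iff[OF S] u v x y by simp
qed

lemma quotient_module_smult:
  assumes S: "submodule S R M" and x: "x \<in> carrier M" and r: "r \<in> carrier R"
  shows "r \<odot>\<^bsub>quotient_module M S\<^esub> quot_class M S x = quot_class M S (r \<odot>\<^bsub>M\<^esub> x)"
proof -
  let ?u = "quot_rep M S (quot_class M S x)"
  note u = quot_rep_class[OF S x]
  have "r \<odot>\<^bsub>M\<^esub> ?u \<ominus>\<^bsub>M\<^esub> r \<odot>\<^bsub>M\<^esub> x = r \<odot>\<^bsub>M\<^esub> (?u \<ominus>\<^bsub>M\<^esub> x)"
    using u(1) x r by (simp add: M.minus_eq smult_r_distr smult_r_minus)
  also have "\<dots> \<in> S" using u(2) r submoduleE(4)[OF S] by simp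
  finally show ?thesis unfolding quotient_module_def using quot_class_eq_iff[OF S] u x r by simp
qed

lemma module_quotient_module:
  assumes S: "submodule S R M"
  shows "module R (quotient_module M S)"
proof -
  let ?Q = "quotient_module M S"
  have car: "carrier ?Q = quot_class M S ` carrier M"
    and zero: "\<zero>\<^bsub>?Q\<^esub> = quot_class M S \<zero>\<^bsub>M\<^esub>" by (simp_all add: quotient_module_def)
  note add = quotient_module_add[OF S] and smult = quotient_module_smult[OF S]
  have "abelian_group ?Q"
  proof (rule abelian_groupI)
    fix X assume "X \<in> carrier ?Q"
    then obtain x where x: "x \<in> carrier M" "X = quot_class M S x" unfolding car by auto
    then have "quot_class M S (\<ominus>\<^bsub>M\<^esub> x) \<oplus>\<^bsub>?Q\<^esub> X = \<zero>\<^bsub>?Q\<^esub>"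
      using add zero by (simp add: M.l_neg)
    then show "\<exists>Y\<in>carrier ?Q. Y \<oplus>\<^bsub>?Q\<^esub> X = \<zero>\<^bsub>?Q\<^esub>" using x car by auto
  qed (auto simp: car zero add M.a_ac)
  then show ?thesis
    by (rule moduleI[OF is_cring])
      (auto simp: car add smult smult_l_distr smult_r_distr smult_assoc1)
qed

end

lemma mod_hom_quot_class:
  fixes M :: "('a, 'n) module"
  assumes "module R M" and S: "submodule S R M"
  shows "mod_hom R M (quotient_module M S) (quot_class M S)"
proof -
  interpret module R M by fact
  show ?thesis
    unfolding mod_hom_def
    using quotient_module_add[OF S] quotient_module_smult[OF S]
    by (auto simp: quotient_module_def)
qed

lemma quot_class_eq_zero_iff:
  assumes "module R M" and S: "submodule S R M" and x: "x \<in> carrier M"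
  shows "quot_class M S x = \<zero>\<^bsub>quotient_module M S\<^esub> \<longleftrightarrow> x \<in> S"
proof -
  interpret module R M by fact
  show ?thesis
    using quot_class_eq_iff[OF S x M.zero_closed] x
    by (simp add: quotient_module_def M.minus_eq a_inv_def)
qed

lemma mod_hom_comp:
  "mod_hom R M M' f \<Longrightarrow> mod_hom R M' M'' g \<Longrightarrow> mod_hom R M M'' (g \<circ> f)"
  unfolding mod_hom_def by (auto simp: Pi_iff)

lemma mod_hom_zero:
  assumes "module R M" and "module R M'" and f: "mod_hom R M M' f"
  shows "f \<zero>\<^bsub>M\<^esub> = \<zero>\<^bsub>M'\<^esub>"
proof -
  interpret M: module R M by fact
  interpret M': module R M' by fact
  have "f \<zero>\<^bsub>M\<^esub> = f (\<zero>\<^bsub>R\<^esub> \<odot>\<^bsub>M\<^esub> \<zero>\<^bsub>M\<^esub>)" by simp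
  also have "\<dots> = \<zero>\<^bsub>R\<^esub> \<odot>\<^bsub>M'\<^esub> f \<zero>\<^bsub>M\<^esub>"
    using f M.R.zero_closed M.zero_closed unfolding mod_hom_def by blast
  also have "\<dots> = \<zero>\<^bsub>M'\<^esub>" using f unfolding mod_hom_def by (simp add: Pi_iff)
  finally show ?thesis .
qed

lemma mod_hom_kernel_submodule:
  assumes "module R M" and "module R M'" and f: "mod_hom R M M' f"
  shows "submodule {x \<in> carrier M. f x = \<zero>\<^bsub>M'\<^esub>} R M"
proof -
  interpret M: module R M by fact
  interpret M': module R M' by fact
  have neg: "\<ominus>\<^bsub>M\<^esub> x = (\<ominus>\<^bsub>R\<^esub> \<one>\<^bsub>R\<^esub>) \<odot>\<^bsub>M\<^esub> x" if "x \<in> carrier M" for x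
    using that by (simp add: M.smult_l_minus)
  show ?thesis
    using f mod_hom_zero[OF assms] unfolding mod_hom_def
    by (intro M.submoduleI) (auto simp: neg)
qed

lemma ideal_kills_add:
  assumes "module R M" "X \<subseteq> carrier R" "u \<in> carrier M" "v \<in> carrier M"
    and "ideal_kills M X u" "ideal_kills M X v"
  shows "ideal_kills M X (u \<oplus>\<^bsub>M\<^esub> v)"
proof -
  interpret module R M by fact
  show ?thesis using assms unfolding ideal_kills_def by (auto simp: smult_r_distr subset_iff)
qed

lemma ideal_kills_add_cancel:
  assumes "module R M" "X \<subseteq> carrier R" "u \<in> carrier M" "v \<in> carrier M"
    and "ideal_kills M X (u \<oplus>\<^bsub>M\<^esub> v)" "ideal_kills M X v"
  shows "ideal_kills M X u"
proof -
  interpret module R M by fact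
  show ?thesis using assms unfolding ideal_kills_def by (auto simp: smult_r_distr subset_iff)
qed

lemma ideal_module_generator:
  "a \<in> K \<Longrightarrow> m \<in> carrier M \<Longrightarrow> a \<odot>\<^bsub>M\<^esub> m \<in> ideal_module R M K"
  unfolding ideal_module_def by blast

lemma ideal_module_least:
  "submodule H R M \<Longrightarrow> (\<And>a m. a \<in> K \<Longrightarrow> m \<in> carrier M \<Longrightarrow> a \<odot>\<^bsub>M\<^esub> m \<in> H)
   \<Longrightarrow> ideal_module R M K \<subseteq> H"
  unfolding ideal_module_def by blast

lemma ideal_module_mono:
  "K \<subseteq> L \<Longrightarrow> ideal_module R M K \<subseteq> ideal_module R M L"
  unfolding ideal_module_def by blast

lemma ideal_module_submodule:
  assumes "module R M" and "K \<subseteq> carrier R"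
  shows "submodule (ideal_module R M K) R M"
proof -
  interpret module R M by fact
  let ?F = "{H. submodule H R M \<and> {a \<odot>\<^bsub>M\<^esub> m | a m. a \<in> K \<and> m \<in> carrier M} \<subseteq> H}"
  have "carrier M \<in> ?F" using carrier_is_submodule assms(2) by auto
  then show ?thesis
    unfolding ideal_module_def
  proof (intro submoduleI)
    show "\<zero>\<^bsub>M\<^esub> \<in> \<Inter>?F"
      using subgroup.one_closed[OF submodule.axioms(1)] by fastforce
    show "\<ominus>\<^bsub>M\<^esub> a \<in> \<Inter>?F" if "a \<in> \<Inter>?F" for a
      using that submoduleE(3) by blast
    show "a \<oplus>\<^bsub>M\<^esub> b \<in> \<Inter>?F" if "a \<in> \<Inter>?F" "b \<in> \<Inter>?F" for a b
      using that submoduleE(5) by blast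
    show "a \<odot>\<^bsub>M\<^esub> x \<in> \<Inter>?F" if "a \<in> carrier R" "x \<in> \<Inter>?F" for a x
      using that submoduleE(4) by blast
  qed blast
qed

lemma cogenerator_separates_submodule:
  fixes M :: "('a, 'n) module"
  assumes "module R M" and cog: "cogenerator_module TYPE(('a + 'n) set) R N"
    and S: "submodule S R M" and x: "x \<in> carrier M" "x \<notin> S"
  shows "\<exists>h. mod_hom R M N h \<and> (\<forall>s\<in>S. h s = \<zero>\<^bsub>N\<^esub>) \<and> h x \<noteq> \<zero>\<^bsub>N\<^esub>"
proof -
  interpret module R M by fact
  let ?Q = "quotient_module M S" and ?q = "quot_class M S"
  have Q: "module R ?Q" by (rule module_quotient_module[OF S])
  have N: "module R N" using cog unfolding cogenerator_module_def by blast
  have q: "mod_hom R M ?Q ?q" by (rule mod_hom_quot_class[OF \<open>module R M\<close> S])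
  have "?q x \<in> carrier ?Q" "?q x \<noteq> \<zero>\<^bsub>?Q\<^esub>"
    using x quot_class_eq_zero_iff[OF \<open>module R M\<close> S] by (auto simp: quotient_module_def)
  then obtain f where f: "mod_hom R ?Q N f" and fx: "f (?q x) \<noteq> \<zero>\<^bsub>N\<^esub>"
    using cog Q unfolding cogenerator_module_def by blast
  have "f (?q s) = \<zero>\<^bsub>N\<^esub>" if "s \<in> S" for s
    using that submoduleE(1)[OF S] quot_class_eq_zero_iff[OF \<open>module R M\<close> S]
      mod_hom_zero[OF Q N f] by (metis subsetD)
  then show ?thesis using mod_hom_comp[OF q f] fx by auto
qed

lemma mod_hom_image_ideal_kills:
  assumes h: "mod_hom R M N h" and K: "K \<subseteq> carrier R"
    and vanish: "\<forall>s\<in>ideal_module R M K. h s = \<zero>\<^bsub>N\<^esub>" and m: "m \<in> carrier M"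
  shows "ideal_kills N K (h m)"
  unfolding ideal_kills_def
proof
  fix k assume k: "k \<in> K"
  then have "k \<odot>\<^bsub>N\<^esub> h m = h (k \<odot>\<^bsub>M\<^esub> m)" using h K m unfolding mod_hom_def by auto
  also have "\<dots> = \<zero>\<^bsub>N\<^esub>" using vanish ideal_module_generator[OF k m] by blast
  finally show "k \<odot>\<^bsub>N\<^esub> h m = \<zero>\<^bsub>N\<^esub>" .
qed

lemma mod_hom_vanishes_on_ideal_module:
  assumes "module R M" "module R N" and h: "mod_hom R M N h" and L: "L \<subseteq> carrier R"
    and kills: "\<forall>m\<in>carrier M. ideal_kills N L (h m)" and x: "x \<in> ideal_module R M L"
  shows "h x = \<zero>\<^bsub>N\<^esub>"
proof -
  have "ideal_module R M L \<subseteq> {x \<in> carrier M. h x = \<zero>\<^bsub>N\<^esub>}"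
  proof (rule ideal_module_least[OF mod_hom_kernel_submodule[OF assms(1-3)]])
    fix a m assume "a \<in> L" "m \<in> carrier M"
    then show "a \<odot>\<^bsub>M\<^esub> m \<in> {x \<in> carrier M. h x = \<zero>\<^bsub>N\<^esub>}"
      using h L kills module.smult_closed[OF assms(1)] unfolding mod_hom_def ideal_kills_def
      by auto
  qed
  then show ?thesis using x by blast
qed

lemma cogenerator_ideal_module_eq:
  fixes N :: "('a, 'n) module"
  assumes N: "module R N" and cog: "cogenerator_module TYPE(('a + 'n) set) R N"
    and KL: "K \<subseteq> L" and L: "L \<subseteq> carrier R"
    and kills: "\<forall>u\<in>carrier N. ideal_kills N K u \<longrightarrow> ideal_kills N L u"
  shows "ideal_module R N K = ideal_module R N L"
proof
  show "ideal_module R N K \<subseteq> ideal_module R N L" by (rule ideal_module_mono[OF KL])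
  have K: "K \<subseteq> carrier R" using KL L by blast
  show "ideal_module R N L \<subseteq> ideal_module R N K"
  proof
    fix x assume x: "x \<in> ideal_module R N L"
    then have "x \<in> carrier N"
      using module.submoduleE(1)[OF N ideal_module_submodule[OF N L]] by blast
    show "x \<in> ideal_module R N K"
    proof (rule ccontr)
      assume "x \<notin> ideal_module R N K"
      then obtain h where h: "mod_hom R N N h"
        and vanish: "\<forall>s\<in>ideal_module R N K. h s = \<zero>\<^bsub>N\<^esub>" and hx: "h x \<noteq> \<zero>\<^bsub>N\<^esub>"
        using cogenerator_separates_submodule[OF N cog ideal_module_submodule[OF N K] \<open>x \<in> carrier N\<close>]
        by blast
      have "\<forall>m\<in>carrier N. ideal_kills N L (h m)"
        using kills mod_hom_image_ideal_kills[OF h K vanish] h unfolding mod_hom_def by auto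
      then show False using mod_hom_vanishes_on_ideal_module[OF N N h L _ x] hx by blast
    qed
  qed
qed

lemma IJ_prime_uniform:
  assumes N: "module R N" and I: "ideal I R" and J: "ideal J R" and prime: "IJ_prime R N I J"
  shows "(\<forall>u\<in>carrier N. ideal_kills N (I \<cdot>\<^bsub>R\<^esub> J) u \<longrightarrow> ideal_kills N I u) \<or>
         (\<forall>u\<in>carrier N. ideal_kills N (I \<cdot>\<^bsub>R\<^esub> J) u \<longrightarrow> ideal_kills N J u)"
proof (rule ccontr)
  interpret module R N by fact
  let ?K = "I \<cdot>\<^bsub>R\<^esub> J"
  have carr: "I \<subseteq> carrier R" "J \<subseteq> carrier R" "?K \<subseteq> carrier R"
    using I J ideal_prod_in_carrier by (auto dest: ideal.Icarr)
  assume "\<not> ?thesis"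
  then obtain u v where u: "u \<in> carrier N" "ideal_kills N ?K u" "\<not> ideal_kills N I u"
    and v: "v \<in> carrier N" "ideal_kills N ?K v" "\<not> ideal_kills N J v" by blast
  have uJ: "ideal_kills N J u" and vI: "ideal_kills N I v"
    using prime u v unfolding IJ_prime_def by blast+
  have "ideal_kills N ?K (u \<oplus>\<^bsub>N\<^esub> v)" by (rule ideal_kills_add[OF N carr(3) u(1) v(1) u(2) v(2)])
  then have "ideal_kills N I (u \<oplus>\<^bsub>N\<^esub> v) \<or> ideal_kills N J (v \<oplus>\<^bsub>N\<^esub> u)"
    using prime u(1) v(1) unfolding IJ_prime_def by (simp add: M.a_comm)
  then show False
    using ideal_kills_add_cancel[OF N carr(1) u(1) v(1) _ vI] u(3)
      ideal_kills_add_cancel[OF N carr(2) v(1) u(1) _ uJ] v(3) by blast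
qed

theorem mainTheorem7:
  fixes R :: "'a ring" and N :: "('a, 'n) module" and I J :: "'a set"
  assumes "cring R"
    and "ideal I R" and "ideal J R"
    and "module R N"
    and "injective_module TYPE(('a + 'n) set) R N"
    and "cogenerator_module TYPE(('a + 'n) set) R N"
  shows "(I_reduced R N I \<longrightarrow> I_coreduced R N I) \<and>
         (IJ_prime R N I J \<longrightarrow> IJ_coprime R N I J)"
proof -
  interpret module R N by fact
  have I: "I \<subseteq> carrier R" and J: "J \<subseteq> carrier R"
    using assms(2,3) by (auto dest: ideal.Icarr)
  have II: "I \<cdot>\<^bsub>R\<^esub> I \<subseteq> I" and IJ: "I \<cdot>\<^bsub>R\<^esub> J \<subseteq> I" "I \<cdot>\<^bsub>R\<^esub> J \<subseteq> J"
    using ideal_prod_inter assms(2,3) by blast+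
  note eq = cogenerator_ideal_module_eq[OF assms(4,6)]
  have "I_coreduced R N I" if "I_reduced R N I"
    using eq[OF II I] that unfolding I_reduced_def I_coreduced_def by simp
  moreover have "IJ_coprime R N I J" if "IJ_prime R N I J"
    using IJ_prime_uniform[OF assms(4,2,3) that] eq[OF IJ(1) I] eq[OF IJ(2) J]
    unfolding IJ_coprime_def by blast
  ultimately show ?thesis by blast
qed

end
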